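(* Let $\mathcal{G}$ and $\mathcal{H}$ be sets and let $G_1,H_1,G_2,H_2,\dots,G_n,H_n$ be random variables forming a Markov chain (in this order), with each $G_i\in\mathcal{G}$ and $H_i\in\mathcal{H}$. Let $v:\mathcal{G}\to\mathbb{R}_{\ge0}$ and $r:\mathcal{H}\to\mathbb{R}$ be functions such that $|r(H_i)|\le a\sqrt{v(G_i)}$ for some constant $a>0$ and $\mathbb{E}[r(H_i)\mid G_i]\le 0$ for all $i$. Then for every $\lambda>0$, $$P\Big(\sum_{i=1}^n\big(r(H_i)-v(G_i)\big)\ge\lambda\Big)\le\exp\Big(-\frac{2}{a^2}\lambda\Big).$$ *)

theory Defs
  imports "HOL-Probability.Probability"
begin

text \<open>Alternating chain G_0, H_0, G_1, H_1, ..., G_(n-1), H_(n-1) (0-indexed).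
  past_before_H M SG SH G H i : sigma-algebra generated by G_0..G_i, H_0..H_(i-1)
  past_before_G M SG SH G H i : sigma-algebra generated by G_0..G_i, H_0..H_i\<close>

definition past_before_H ::
  "'w measure \<Rightarrow> 'g measure \<Rightarrow> 'h measure \<Rightarrow> (nat \<Rightarrow> 'w \<Rightarrow> 'g) \<Rightarrow> (nat \<Rightarrow> 'w \<Rightarrow> 'h) \<Rightarrow> nat \<Rightarrow> 'w measure"
  where "past_before_H M SG SH G H i = sigma (space M)
     ({G j -` A \<inter> space M | j A. j \<le> i \<and> A \<in> sets SG} \<union>
      {H j -` B \<inter> space M | j B. j < i \<and> B \<in> sets SH})"

definition past_through_H ::
  "'w measure \<Rightarrow> 'g measure \<Rightarrow> 'h measure \<Rightarrow> (nat \<Rightarrow> 'w \<Rightarrow> 'g) \<Rightarrow> (nat \<Rightarrow> 'w \<Rightarrow> 'h) \<Rightarrow> nat \<Rightarrow> 'w measure"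
  where "past_through_H M SG SH G H i = sigma (space M)
     ({G j -` A \<inter> space M | j A. j \<le> i \<and> A \<in> sets SG} \<union>
      {H j -` B \<inter> space M | j B. j \<le> i \<and> B \<in> sets SH})"

text \<open>Markov property of the chain G_0, H_0, ..., G_(n-1), H_(n-1): the conditional law of each
  variable given all preceding ones equals its conditional law given the immediately preceding one.\<close>

definition alt_markov_chain ::
  "'w measure \<Rightarrow> 'g measure \<Rightarrow> 'h measure \<Rightarrow> nat \<Rightarrow> (nat \<Rightarrow> 'w \<Rightarrow> 'g) \<Rightarrow> (nat \<Rightarrow> 'w \<Rightarrow> 'h) \<Rightarrow> bool"
  where "alt_markov_chain M SG SH n G H \<longleftrightarrow>
     (\<forall>i<n. G i \<in> measurable M SG) \<and> (\<forall>i<n. H i \<in> measurable M SH) \<and>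
     (\<forall>i<n. \<forall>B\<in>sets SH. AE \<omega> in M.
         real_cond_exp M (past_before_H M SG SH G H i) (\<lambda>x. indicator B (H i x)) \<omega> =
         real_cond_exp M (vimage_algebra (space M) (G i) SG) (\<lambda>x. indicator B (H i x)) \<omega>) \<and>
     (\<forall>i. Suc i < n \<longrightarrow> (\<forall>A\<in>sets SG. AE \<omega> in M.
         real_cond_exp M (past_through_H M SG SH G H i) (\<lambda>x. indicator A (G (Suc i) x)) \<omega> =
         real_cond_exp M (vimage_algebra (space M) (H i) SH) (\<lambda>x. indicator A (G (Suc i) x)) \<omega>))"

end

theory Submission
  imports Defs
begin

text \<open>Let s = 2 / a^2 and E_k = exp (s * sum_{i<k} (r(H_i) - v(G_i))). Convexity of exp on
  [-u, u] with u = s a sqrt(v(G_k)), together with cosh u \<le> exp (u^2 / 2) = exp (s v(G_k)), gives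
  E_{k+1} \<le> E_k + Z r(H_k) for a bounded weight Z \<ge> 0 that is a function of G_0, H_0, ..., G_k.
  By the Markov property the integral of Z r(H_k) equals that of E[Z | G_k] E[r(H_k) | G_k], which
  is nonpositive. Hence E[E_n] \<le> 1, and Markov's inequality for E_n at level exp (s lam) gives
  the bound.\<close>

lemma cosh_le_exp_half_square:
  fixes x :: real
  shows "cosh x \<le> exp (x\<^sup>2 / 2)"
proof -
  have "cosh \<bar>x\<bar> \<le> exp (\<bar>x\<bar>\<^sup>2 / 2)"
  proof -
    have "-(2 * \<bar>x\<bar>) * (1/2) + ln (1 + (1/2) * (exp (2 * \<bar>x\<bar>) - 1)) \<le> (2 * \<bar>x\<bar>)\<^sup>2 / 8"
      using Hoeffdings_lemma_aux[of "2 * \<bar>x\<bar>" "1/2"] by simp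
    moreover have "1 + (1/2) * (exp (2 * \<bar>x\<bar>) - 1) = exp \<bar>x\<bar> * cosh \<bar>x\<bar>"
      by (simp add: cosh_def field_simps exp_minus_inverse flip: exp_add)
    ultimately have "ln (cosh \<bar>x\<bar>) \<le> \<bar>x\<bar>\<^sup>2 / 2"
      using cosh_real_pos by (simp add: ln_mult power2_eq_square)
    then show ?thesis
      using cosh_real_pos by (metis exp_ln exp_le_cancel_iff)
  qed
  then show ?thesis
    by (cases "x \<ge> 0") simp_all
qed

definition sinhc :: "real \<Rightarrow> real"
  where "sinhc u = (if u = 0 then 1 else sinh u / u)"

lemma borel_measurable_sinhc [measurable]: "sinhc \<in> borel_measurable borel"
proof -
  have [measurable]: "sinh \<in> borel_measurable (borel :: real measure)"
    by (intro borel_measurable_continuous_onI continuous_intros)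
  show ?thesis
    unfolding sinhc_def by measurable
qed

lemma sinhc_nonneg_le_cosh:
  fixes u :: real
  assumes "u \<ge> 0"
  shows "0 \<le> sinhc u \<and> sinhc u \<le> cosh u"
proof (cases "u = 0")
  case True
  then show ?thesis by (simp add: sinhc_def)
next
  case False
  with assms have u: "u > 0" by simp
  have "\<exists>z>0. z < u \<and> sinh u - sinh 0 = (u - 0) * cosh z"
    by (rule MVT2) (use u in \<open>auto intro!: derivative_eq_intros\<close>)
  then obtain z where z: "0 < z" "z < u" "sinh u = u * cosh z"
    by auto
  then have "sinhc u = cosh z"
    using u by (simp add: sinhc_def)
  moreover have "cosh z \<le> cosh u"
    using z cosh_real_nonneg_le_iff by simp
  ultimately show ?thesis
    by simp
qed

text \<open>The right-hand side is the chord of \<open>exp\<close> over \<open>[-u, u]\<close>.\<close>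

lemma exp_le_cosh_add_sinhc:
  fixes t u :: real
  assumes "\<bar>t\<bar> \<le> u"
  shows "exp t \<le> cosh u + t * sinhc u"
proof (cases "u = 0")
  case True
  then show ?thesis using assms by (simp add: sinhc_def)
next
  case False
  with assms have u: "u > 0" by simp
  define l where "l = (1 + t / u) / 2"
  have l: "0 \<le> l" "l \<le> 1"
    using assms u by (auto simp: l_def field_simps abs_le_iff)
  have t: "t = (1 - l) * (-u) + l * u"
    using u by (simp add: l_def field_simps)
  have "exp t \<le> (1 - l) * exp (-u) + l * exp u"
    using convex_onD[OF convex_on_exp[of 1], of l "-u" u] l unfolding t by simp
  also have "\<dots> = cosh u + t * sinhc u"
    using u by (simp add: sinhc_def l_def cosh_def sinh_def field_simps)
  finally show ?thesis .
qed

definition drift_weight :: "real \<Rightarrow> real \<Rightarrow> real"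
  where "drift_weight a x = exp (- (2 / a\<^sup>2) * x) * (2 / a\<^sup>2) * sinhc (2 / a\<^sup>2 * (a * sqrt x))"

lemma borel_measurable_drift_weight [measurable]:
  "(\<lambda>x. drift_weight a x) \<in> borel_measurable borel"
  unfolding drift_weight_def by measurable

lemma exp_neg_mult_cosh_le_1:
  fixes a x :: real
  assumes "a > 0" "x \<ge> 0"
  shows "exp (- (2 / a\<^sup>2) * x) * cosh (2 / a\<^sup>2 * (a * sqrt x)) \<le> 1"
proof -
  have "(2 / a\<^sup>2 * (a * sqrt x))\<^sup>2 / 2 = 2 / a\<^sup>2 * x"
    using assms by (simp add: power_mult_distrib power2_eq_square field_simps)
  then have "cosh (2 / a\<^sup>2 * (a * sqrt x)) \<le> exp (2 / a\<^sup>2 * x)"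
    using cosh_le_exp_half_square by metis
  then show ?thesis
    by (simp add: exp_minus field_simps)
qed

lemma drift_weight_nonneg:
  fixes a x :: real
  assumes "a > 0" "x \<ge> 0"
  shows "0 \<le> drift_weight a x"
  using sinhc_nonneg_le_cosh[of "2 / a\<^sup>2 * (a * sqrt x)"] assms by (simp add: drift_weight_def)

lemma drift_weight_le:
  fixes a x :: real
  assumes "a > 0" "x \<ge> 0"
  shows "drift_weight a x \<le> 2 / a\<^sup>2"
proof -
  define u where "u = 2 / a\<^sup>2 * (a * sqrt x)"
  have "drift_weight a x \<le> exp (- (2 / a\<^sup>2) * x) * (2 / a\<^sup>2) * cosh u"
    unfolding drift_weight_def u_def[symmetric]
    using sinhc_nonneg_le_cosh[of u] assms by (intro mult_left_mono) (auto simp: u_def)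
  also have "\<dots> \<le> 2 / a\<^sup>2"
    using mult_left_mono[OF exp_neg_mult_cosh_le_1[OF assms], of "2 / a\<^sup>2"]
    by (simp add: u_def mult_ac)
  finally show ?thesis .
qed

lemma exp_drift_le_linear:
  fixes a x y :: real
  assumes "a > 0" "x \<ge> 0" "\<bar>y\<bar> \<le> a * sqrt x"
  shows "exp (2 / a\<^sup>2 * (y - x)) \<le> 1 + drift_weight a x * y"
proof -
  define u where "u = 2 / a\<^sup>2 * (a * sqrt x)"
  have "\<bar>2 / a\<^sup>2 * y\<bar> \<le> u"
    using assms by (simp add: u_def abs_mult divide_right_mono)
  then have "exp (2 / a\<^sup>2 * y) \<le> cosh u + 2 / a\<^sup>2 * y * sinhc u"
    by (rule exp_le_cosh_add_sinhc)
  moreover have "exp (2 / a\<^sup>2 * (y - x)) = exp (- (2 / a\<^sup>2) * x) * exp (2 / a\<^sup>2 * y)"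
    by (simp add: diff_divide_distrib right_diff_distrib flip: exp_add)
  ultimately have "exp (2 / a\<^sup>2 * (y - x)) \<le> exp (- (2 / a\<^sup>2) * x) * (cosh u + 2 / a\<^sup>2 * y * sinhc u)"
    by simp
  also have "\<dots> = exp (- (2 / a\<^sup>2) * x) * cosh u + drift_weight a x * y"
    by (simp add: drift_weight_def u_def algebra_simps)
  also have "\<dots> \<le> 1 + drift_weight a x * y"
    using exp_neg_mult_cosh_le_1[OF assms(1,2)] by (simp add: u_def)
  finally show ?thesis .
qed

lemma exp_drift_le_exp_half:
  fixes a x y :: real
  assumes "a > 0" "x \<ge> 0" "y \<le> a * sqrt x"
  shows "exp (2 / a\<^sup>2 * (y - x)) \<le> exp (1 / 2)"
proof -
  have "2 / a\<^sup>2 * (y - x) \<le> 2 / a\<^sup>2 * (sqrt x * (a - sqrt x))"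
    using assms by (intro mult_left_mono) (auto simp: algebra_simps)
  also have "\<dots> \<le> 2 / a\<^sup>2 * (a\<^sup>2 / 4)"
    using mult_const_minus_self_real_le[of "sqrt x" a] by (intro mult_left_mono) auto
  also have "\<dots> = 1 / 2"
    using assms by simp
  finally show ?thesis
    by simp
qed

context prob_space
begin

lemma AE_real_cond_exp_bounded:
  assumes "subalgebra M F" and [measurable]: "f \<in> borel_measurable M"
    and f: "\<And>\<omega>. \<omega> \<in> space M \<Longrightarrow> 0 \<le> f \<omega> \<and> f \<omega> \<le> C"
  shows "AE \<omega> in M. 0 \<le> real_cond_exp M F f \<omega> \<and> real_cond_exp M F f \<omega> \<le> C"
proof -
  interpret Fsub: finite_measure_subalgebra M F
    by unfold_locales (rule assms(1))
  have "integrable M f"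
    by (rule integrable_const_bound[where B = C]) (use f in auto)
  then show ?thesis
    using Fsub.real_cond_exp_pos[of f] Fsub.real_cond_exp_le_c[of f C] f by auto
qed

lemma integral_mult_eq_real_cond_exp_mult:
  assumes F: "subalgebra M F" and Gs: "subalgebra M Gs"
    and [measurable]: "Z \<in> borel_measurable F" and Z: "\<And>\<omega>. \<omega> \<in> space M \<Longrightarrow> 0 \<le> Z \<omega> \<and> Z \<omega> \<le> C"
    and [measurable]: "Y \<in> borel_measurable M" and Y: "\<And>\<omega>. \<omega> \<in> space M \<Longrightarrow> 0 \<le> Y \<omega> \<and> Y \<omega> \<le> D"
    and cond: "AE \<omega> in M. real_cond_exp M F Y \<omega> = real_cond_exp M Gs Y \<omega>"
  shows "(\<integral>\<omega>. Z \<omega> * Y \<omega> \<partial>M) = (\<integral>\<omega>. real_cond_exp M Gs Z \<omega> * Y \<omega> \<partial>M)"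
proof -
  interpret Fsub: finite_measure_subalgebra M F
    by unfold_locales (rule F)
  interpret Gsub: finite_measure_subalgebra M Gs
    by unfold_locales (rule Gs)
  have [measurable]: "Z \<in> borel_measurable M"
    by (rule measurable_from_subalg[OF F]) measurable
  define EY where "EY = real_cond_exp M Gs Y"
  define EZ where "EZ = real_cond_exp M Gs Z"
  have [measurable]: "EY \<in> borel_measurable Gs" "EZ \<in> borel_measurable Gs"
    "EY \<in> borel_measurable M" "EZ \<in> borel_measurable M"
    by (simp_all add: EY_def EZ_def)
  have EY: "AE \<omega> in M. 0 \<le> EY \<omega> \<and> EY \<omega> \<le> D"
    unfolding EY_def by (rule AE_real_cond_exp_bounded[OF Gs _ Y]) simp
  have EZ: "AE \<omega> in M. 0 \<le> EZ \<omega> \<and> EZ \<omega> \<le> C"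
    unfolding EZ_def by (rule AE_real_cond_exp_bounded[OF Gs _ Z]) simp
  have bound: "\<bar>p * q\<bar> \<le> b * c" if "0 \<le> p \<and> p \<le> b" "0 \<le> q \<and> q \<le> c" for p q b c :: real
    using that by (simp add: abs_mult mult_mono)
  have "integrable M (\<lambda>\<omega>. Z \<omega> * Y \<omega>)"
    by (rule integrable_const_bound[where B = "C * D"]) (use Z Y bound in auto)
  then have "(\<integral>\<omega>. Z \<omega> * Y \<omega> \<partial>M) = (\<integral>\<omega>. Z \<omega> * real_cond_exp M F Y \<omega> \<partial>M)"
    by (rule Fsub.real_cond_exp_intg(2)[symmetric]) simp_all
  also have "\<dots> = (\<integral>\<omega>. EY \<omega> * Z \<omega> \<partial>M)"
    by (rule integral_cong_AE) (use cond in \<open>auto simp: EY_def mult.commute\<close>)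
  also have "\<dots> = (\<integral>\<omega>. EY \<omega> * EZ \<omega> \<partial>M)"
  proof -
    have "AE \<omega> in M. \<bar>EY \<omega> * Z \<omega>\<bar> \<le> D * C"
      using EY AE_space by eventually_elim (use Z bound in blast)
    then have "integrable M (\<lambda>\<omega>. EY \<omega> * Z \<omega>)"
      by (intro integrable_const_bound[where B = "D * C"]) simp_all
    then show ?thesis
      unfolding EZ_def by (rule Gsub.real_cond_exp_intg(2)[symmetric]) simp_all
  qed
  also have "\<dots> = (\<integral>\<omega>. EZ \<omega> * Y \<omega> \<partial>M)"
  proof -
    have "AE \<omega> in M. \<bar>EZ \<omega> * Y \<omega>\<bar> \<le> C * D"
      using EZ AE_space by eventually_elim (use Y bound in blast)
    then have "integrable M (\<lambda>\<omega>. EZ \<omega> * Y \<omega>)"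
      by (intro integrable_const_bound[where B = "C * D"]) simp_all
    then show ?thesis
      unfolding EY_def using Gsub.real_cond_exp_intg(2) by (simp add: mult.commute)
  qed
  finally show ?thesis
    by (simp add: EZ_def)
qed

lemma distr_density_eq_real_cond_exp:
  assumes F: "subalgebra M F" and Gs: "subalgebra M Gs"
    and [measurable]: "Z \<in> borel_measurable F" and Z: "\<And>\<omega>. \<omega> \<in> space M \<Longrightarrow> 0 \<le> Z \<omega> \<and> Z \<omega> \<le> C"
    and [measurable]: "H \<in> measurable M N"
    and cond: "\<And>B. B \<in> sets N \<Longrightarrow> AE \<omega> in M.
      real_cond_exp M F (\<lambda>x. indicator B (H x)) \<omega> = real_cond_exp M Gs (\<lambda>x. indicator B (H x)) \<omega>"
  shows "distr (density M (\<lambda>\<omega>. ennreal (Z \<omega>))) N H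
       = distr (density M (\<lambda>\<omega>. ennreal (real_cond_exp M Gs Z \<omega>))) N H"
proof (rule measure_eqI)
  interpret Gsub: finite_measure_subalgebra M Gs
    by unfold_locales (rule Gs)
  have [measurable]: "Z \<in> borel_measurable M"
    by (rule measurable_from_subalg[OF F]) measurable
  define W where "W = real_cond_exp M Gs Z"
  have [measurable]: "W \<in> borel_measurable M"
    by (simp add: W_def)
  have W: "AE \<omega> in M. 0 \<le> W \<omega> \<and> W \<omega> \<le> C"
    unfolding W_def by (rule AE_real_cond_exp_bounded[OF Gs _ Z]) simp
  have C: "0 \<le> C"
    using Z not_empty by force
  fix B
  assume "B \<in> sets (distr (density M (\<lambda>\<omega>. ennreal (Z \<omega>))) N H)"
  then have [measurable]: "B \<in> sets N"
    by simp
  have "emeasure (distr (density M (\<lambda>\<omega>. ennreal (Z \<omega>))) N H) B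
      = (\<integral>\<^sup>+\<omega>. ennreal (Z \<omega> * indicator B (H \<omega>)) \<partial>M)"
    by (simp add: emeasure_distr emeasure_density, intro nn_integral_cong)
       (simp add: indicator_def)
  also have "\<dots> = ennreal (\<integral>\<omega>. Z \<omega> * indicator B (H \<omega>) \<partial>M)"
    by (rule nn_integral_eq_integral)
       (use Z C in \<open>auto intro!: integrable_const_bound[where B = C] simp: indicator_def\<close>)
  also have "(\<integral>\<omega>. Z \<omega> * indicator B (H \<omega>) \<partial>M) = (\<integral>\<omega>. W \<omega> * indicator B (H \<omega>) \<partial>M)"
    unfolding W_def
    by (rule integral_mult_eq_real_cond_exp_mult[OF F Gs _ Z, where D = 1])
       (use cond in \<open>auto simp: indicator_def\<close>)
  also have "ennreal \<dots> = (\<integral>\<^sup>+\<omega>. ennreal (W \<omega> * indicator B (H \<omega>)) \<partial>M)"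
    by (rule nn_integral_eq_integral[symmetric])
       (use W C in \<open>auto intro!: integrable_const_bound[where B = C] simp: indicator_def\<close>)
  also have "\<dots> = emeasure (distr (density M (\<lambda>\<omega>. ennreal (W \<omega>))) N H) B"
    by (simp add: emeasure_distr emeasure_density, intro nn_integral_cong)
       (simp add: indicator_def)
  finally show "emeasure (distr (density M (\<lambda>\<omega>. ennreal (Z \<omega>))) N H) B
      = emeasure (distr (density M (\<lambda>\<omega>. ennreal (real_cond_exp M Gs Z \<omega>))) N H) B"
    by (simp add: W_def)
qed simp

lemma integral_mult_nonpos_of_real_cond_exp:
  assumes F: "subalgebra M F" and Gs: "subalgebra M Gs"
    and [measurable]: "Z \<in> borel_measurable F" and Z: "\<And>\<omega>. \<omega> \<in> space M \<Longrightarrow> 0 \<le> Z \<omega> \<and> Z \<omega> \<le> C"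
    and [measurable]: "H \<in> measurable M N" "r \<in> borel_measurable N"
    and r_int: "integrable M (\<lambda>\<omega>. r (H \<omega>))"
    and cond: "\<And>B. B \<in> sets N \<Longrightarrow> AE \<omega> in M.
      real_cond_exp M F (\<lambda>x. indicator B (H x)) \<omega> = real_cond_exp M Gs (\<lambda>x. indicator B (H x)) \<omega>"
    and nonpos: "AE \<omega> in M. real_cond_exp M Gs (\<lambda>x. r (H x)) \<omega> \<le> 0"
  shows "(\<integral>\<omega>. Z \<omega> * r (H \<omega>) \<partial>M) \<le> 0"
proof -
  interpret Gsub: finite_measure_subalgebra M Gs
    by unfold_locales (rule Gs)
  have [measurable]: "Z \<in> borel_measurable M"
    by (rule measurable_from_subalg[OF F]) measurable
  define W where "W = real_cond_exp M Gs Z"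
  have [measurable]: "W \<in> borel_measurable Gs" "W \<in> borel_measurable M"
    by (simp_all add: W_def)
  have W: "AE \<omega> in M. 0 \<le> W \<omega> \<and> W \<omega> \<le> C"
    unfolding W_def by (rule AE_real_cond_exp_bounded[OF Gs _ Z]) simp
  have C: "0 \<le> C"
    using Z not_empty by force
  have Z0: "\<And>\<omega>. \<omega> \<in> space M \<Longrightarrow> 0 \<le> Z \<omega>" and W0: "AE \<omega> in M. 0 \<le> W \<omega>"
    using Z W by auto
  have distr_eq: "distr (density M (\<lambda>\<omega>. ennreal (Z \<omega>))) N H = distr (density M (\<lambda>\<omega>. ennreal (W \<omega>))) N H"
    unfolding W_def by (rule distr_density_eq_real_cond_exp[OF F Gs _ Z _ cond]) simp_all
  have "integrable M (\<lambda>\<omega>. Z \<omega> * r (H \<omega>))"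
    using integrable_mult_right[OF r_int, of C]
    by (rule Bochner_Integration.integrable_bound)
       (use Z C in \<open>auto simp: abs_mult intro!: mult_right_mono\<close>)
  then have "integrable (distr (density M (\<lambda>\<omega>. ennreal (W \<omega>))) N H) r"
    unfolding distr_eq[symmetric] by (subst integrable_distr_eq) (auto simp: integrable_density Z0)
  then have W_int: "integrable M (\<lambda>\<omega>. W \<omega> * r (H \<omega>))"
    by (subst (asm) integrable_distr_eq) (auto simp: integrable_density W0)
  have "(\<integral>\<omega>. Z \<omega> * r (H \<omega>) \<partial>M) = integral\<^sup>L (distr (density M (\<lambda>\<omega>. ennreal (Z \<omega>))) N H) r"
    by (simp add: integral_distr integral_density Z0)
  also have "\<dots> = (\<integral>\<omega>. W \<omega> * r (H \<omega>) \<partial>M)"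
    unfolding distr_eq by (simp add: integral_distr integral_density W0)
  also have "\<dots> = (\<integral>\<omega>. W \<omega> * real_cond_exp M Gs (\<lambda>x. r (H x)) \<omega> \<partial>M)"
    by (rule Gsub.real_cond_exp_intg(2)[symmetric]) (use W_int in simp_all)
  also have "\<dots> \<le> (\<integral>\<omega>. 0 \<partial>M)"
    by (rule integral_mono_AE)
       (use Gsub.real_cond_exp_intg(1)[OF W_int] W0 nonpos in \<open>auto intro: mult_nonneg_nonpos\<close>)
  finally show ?thesis
    by simp
qed

end

lemma subalgebra_vimage_algebra:
  assumes "f \<in> measurable M N"
  shows "subalgebra M (vimage_algebra (space M) f N)"
  unfolding subalgebra_def
  using assms measurable_space[OF assms]
  by (auto simp: sets_vimage_algebra2 Pi_iff intro: measurable_sets)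

lemma
  fixes M :: "'w measure" and SG :: "'g measure" and SH :: "'h measure"
    and G :: "nat \<Rightarrow> 'w \<Rightarrow> 'g" and H :: "nat \<Rightarrow> 'w \<Rightarrow> 'h" and i :: nat
  defines "X \<equiv> {G j -` A \<inter> space M | j A. j \<le> i \<and> A \<in> sets SG} \<union>
      {H j -` B \<inter> space M | j B. j < i \<and> B \<in> sets SH}"
  shows space_past_before_H: "space (past_before_H M SG SH G H i) = space M"
    and sets_past_before_H: "sets (past_before_H M SG SH G H i) = sigma_sets (space M) X"
proof -
  have "X \<subseteq> Pow (space M)"
    by (auto simp: X_def)
  then show "space (past_before_H M SG SH G H i) = space M"
    and "sets (past_before_H M SG SH G H i) = sigma_sets (space M) X"
    unfolding past_before_H_def X_def by (simp_all add: sets_measure_of)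
qed

lemma subalgebra_past_before_H:
  assumes "\<And>j. j \<le> i \<Longrightarrow> G j \<in> measurable M SG" and "\<And>j. j < i \<Longrightarrow> H j \<in> measurable M SH"
  shows "subalgebra M (past_before_H M SG SH G H i)"
  unfolding subalgebra_def space_past_before_H sets_past_before_H
  using assms by (auto intro!: sets.sigma_sets_subset intro: measurable_sets)

lemma measurable_G_past_before_H:
  assumes "j \<le> i" and "G j \<in> measurable M SG"
  shows "G j \<in> measurable (past_before_H M SG SH G H i) SG"
proof (rule measurableI)
  fix A
  assume "A \<in> sets SG"
  with assms(1) show "G j -` A \<inter> space (past_before_H M SG SH G H i) \<in> sets (past_before_H M SG SH G H i)"
    unfolding space_past_before_H sets_past_before_H by (blast intro: sigma_sets.Basic)
qed (use measurable_space[OF assms(2)] in \<open>simp add: space_past_before_H\<close>)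

lemma measurable_H_past_before_H:
  assumes "j < i" and "H j \<in> measurable M SH"
  shows "H j \<in> measurable (past_before_H M SG SH G H i) SH"
proof (rule measurableI)
  fix B
  assume "B \<in> sets SH"
  with assms(1) show "H j -` B \<inter> space (past_before_H M SG SH G H i) \<in> sets (past_before_H M SG SH G H i)"
    unfolding space_past_before_H sets_past_before_H by (blast intro: sigma_sets.Basic)
qed (use measurable_space[OF assms(2)] in \<open>simp add: space_past_before_H\<close>)

locale markov_drift_chain = prob_space M
  for M :: "'w measure" +
  fixes SG :: "'g measure" and SH :: "'h measure" and n :: nat
    and G :: "nat \<Rightarrow> 'w \<Rightarrow> 'g" and H :: "nat \<Rightarrow> 'w \<Rightarrow> 'h"
    and v :: "'g \<Rightarrow> real" and r :: "'h \<Rightarrow> real" and a :: real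
  assumes markov: "alt_markov_chain M SG SH n G H"
    and v_measurable [measurable]: "v \<in> borel_measurable SG"
    and v_nonneg: "\<And>x. x \<in> space SG \<Longrightarrow> 0 \<le> v x"
    and r_measurable [measurable]: "r \<in> borel_measurable SH"
    and a_pos: "0 < a"
    and r_bounded: "\<And>i \<omega>. i < n \<Longrightarrow> \<omega> \<in> space M \<Longrightarrow> \<bar>r (H i \<omega>)\<bar> \<le> a * sqrt (v (G i \<omega>))"
    and r_integrable: "\<And>i. i < n \<Longrightarrow> integrable M (\<lambda>\<omega>. r (H i \<omega>))"
    and cond_exp_r_nonpos: "\<And>i. i < n \<Longrightarrow>
      AE \<omega> in M. real_cond_exp M (vimage_algebra (space M) (G i) SG) (\<lambda>x. r (H i x)) \<omega> \<le> 0"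
begin

lemma G_measurable: "i < n \<Longrightarrow> G i \<in> measurable M SG"
  and H_measurable: "i < n \<Longrightarrow> H i \<in> measurable M SH"
  using markov by (auto simp: alt_markov_chain_def)

lemma cond_exp_indicator_H_past_eq:
  assumes "i < n" and "B \<in> sets SH"
  shows "AE \<omega> in M. real_cond_exp M (past_before_H M SG SH G H i) (\<lambda>x. indicator B (H i x)) \<omega>
    = real_cond_exp M (vimage_algebra (space M) (G i) SG) (\<lambda>x. indicator B (H i x)) \<omega>"
  using markov assms by (auto simp: alt_markov_chain_def)

lemma v_G_nonneg: "i < n \<Longrightarrow> \<omega> \<in> space M \<Longrightarrow> 0 \<le> v (G i \<omega>)"
  using v_nonneg measurable_space[OF G_measurable] by blast

definition exp_drift :: "nat \<Rightarrow> 'w \<Rightarrow> real"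
  where "exp_drift k \<omega> = exp (2 / a\<^sup>2 * (\<Sum>i<k. r (H i \<omega>) - v (G i \<omega>)))"

lemma exp_drift_pos: "0 < exp_drift k \<omega>"
  by (simp add: exp_drift_def)

lemma exp_drift_Suc: "exp_drift (Suc k) \<omega> = exp_drift k \<omega> * exp (2 / a\<^sup>2 * (r (H k \<omega>) - v (G k \<omega>)))"
  unfolding exp_drift_def by (simp only: sum.lessThan_Suc distrib_left exp_add)

lemma exp_drift_le: "k \<le> n \<Longrightarrow> \<omega> \<in> space M \<Longrightarrow> exp_drift k \<omega> \<le> exp (real k / 2)"
proof (induction k)
  case 0
  then show ?case by (simp add: exp_drift_def)
next
  case (Suc k)
  then have "exp (2 / a\<^sup>2 * (r (H k \<omega>) - v (G k \<omega>))) \<le> exp (1 / 2)"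
    using exp_drift_le_exp_half[OF a_pos v_G_nonneg] r_bounded by (simp add: abs_le_iff)
  with Suc have "exp_drift (Suc k) \<omega> \<le> exp (real k / 2) * exp (1 / 2)"
    unfolding exp_drift_Suc by (intro mult_mono) (auto intro: less_imp_le exp_drift_pos)
  then show ?case
    by (simp add: add_divide_distrib ac_simps flip: exp_add)
qed

lemma borel_measurable_exp_drift:
  assumes "\<And>j. j < k \<Longrightarrow> G j \<in> measurable N SG" and "\<And>j. j < k \<Longrightarrow> H j \<in> measurable N SH"
  shows "exp_drift k \<in> borel_measurable N"
proof -
  have "(\<lambda>\<omega>. r (H j \<omega>) - v (G j \<omega>)) \<in> borel_measurable N" if "j < k" for j
    using measurable_compose[OF assms(2)[OF that] r_measurable]
      measurable_compose[OF assms(1)[OF that] v_measurable] by measurable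
  then show ?thesis
    unfolding exp_drift_def by measurable
qed

lemma integrable_exp_drift:
  assumes "k \<le> n"
  shows "integrable M (exp_drift k)"
proof (rule integrable_const_bound[where B = "exp (real k / 2)"])
  show "AE \<omega> in M. norm (exp_drift k \<omega>) \<le> exp (real k / 2)"
    using exp_drift_le[OF assms] exp_drift_pos by (auto intro!: AE_I2 simp: abs_of_pos)
  show "exp_drift k \<in> borel_measurable M"
    using assms G_measurable H_measurable by (intro borel_measurable_exp_drift) auto
qed

text \<open>Z is a function of G_0, H_0, ..., G_k, so the Markov property lets us condition on G_k alone.\<close>

lemma integral_exp_drift_Suc_le:
  assumes k: "k < n"
  shows "(\<integral>\<omega>. exp_drift (Suc k) \<omega> \<partial>M) \<le> (\<integral>\<omega>. exp_drift k \<omega> \<partial>M)"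
proof -
  define F where "F = past_before_H M SG SH G H k"
  define Z where "Z \<omega> = exp_drift k \<omega> * drift_weight a (v (G k \<omega>))" for \<omega>
  have F: "subalgebra M F"
    unfolding F_def using k G_measurable H_measurable by (intro subalgebra_past_before_H) auto
  have G_F: "G j \<in> measurable F SG" if "j \<le> k" for j
    unfolding F_def using that k G_measurable by (intro measurable_G_past_before_H) auto
  have "exp_drift k \<in> borel_measurable F"
    unfolding F_def using k G_measurable H_measurable
    by (intro borel_measurable_exp_drift measurable_G_past_before_H measurable_H_past_before_H) auto
  then have Z_F: "Z \<in> borel_measurable F"
    using measurable_compose[OF G_F[of k] v_measurable] unfolding Z_def by measurable
  define C where "C = exp (real k / 2) * (2 / a\<^sup>2)"
  have Z: "0 \<le> Z \<omega> \<and> Z \<omega> \<le> C" if "\<omega> \<in> space M" for \<omega>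
  proof -
    have "0 \<le> drift_weight a (v (G k \<omega>))" "drift_weight a (v (G k \<omega>)) \<le> 2 / a\<^sup>2"
      using that k drift_weight_nonneg[OF a_pos v_G_nonneg] drift_weight_le[OF a_pos v_G_nonneg] by auto
    moreover have "0 < exp_drift k \<omega>" "exp_drift k \<omega> \<le> exp (real k / 2)"
      using that k exp_drift_pos exp_drift_le by auto
    ultimately show ?thesis
      unfolding Z_def C_def by (intro conjI mult_nonneg_nonneg mult_mono) auto
  qed
  have Zr_int: "integrable M (\<lambda>\<omega>. Z \<omega> * r (H k \<omega>))"
    using integrable_mult_right[OF r_integrable[OF k], of C]
  proof (rule Bochner_Integration.integrable_bound)
    show "(\<lambda>\<omega>. Z \<omega> * r (H k \<omega>)) \<in> borel_measurable M"
      using measurable_from_subalg[OF F Z_F] measurable_compose[OF H_measurable[OF k] r_measurable]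
      by measurable
    show "AE \<omega> in M. norm (Z \<omega> * r (H k \<omega>)) \<le> norm (C * r (H k \<omega>))"
    proof (rule AE_I2)
      fix \<omega>
      assume "\<omega> \<in> space M"
      with Z have "0 \<le> Z \<omega>" "Z \<omega> \<le> \<bar>C\<bar>"
        by force+
      then show "norm (Z \<omega> * r (H k \<omega>)) \<le> norm (C * r (H k \<omega>))"
        by (simp add: abs_mult mult_right_mono)
    qed
  qed
  have step: "exp_drift (Suc k) \<omega> \<le> exp_drift k \<omega> + Z \<omega> * r (H k \<omega>)" if "\<omega> \<in> space M" for \<omega>
  proof -
    have "exp (2 / a\<^sup>2 * (r (H k \<omega>) - v (G k \<omega>))) \<le> 1 + drift_weight a (v (G k \<omega>)) * r (H k \<omega>)"
      using that k by (intro exp_drift_le_linear a_pos v_G_nonneg r_bounded)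
    then have "exp_drift (Suc k) \<omega> \<le> exp_drift k \<omega> * (1 + drift_weight a (v (G k \<omega>)) * r (H k \<omega>))"
      unfolding exp_drift_Suc by (rule mult_left_mono) (rule less_imp_le[OF exp_drift_pos])
    then show ?thesis
      by (simp add: Z_def algebra_simps)
  qed
  have E_int: "integrable M (exp_drift k)" "integrable M (exp_drift (Suc k))"
    using k by (simp_all add: integrable_exp_drift)
  have "(\<integral>\<omega>. exp_drift (Suc k) \<omega> \<partial>M) \<le> (\<integral>\<omega>. exp_drift k \<omega> + Z \<omega> * r (H k \<omega>) \<partial>M)"
    using E_int Zr_int step by (intro integral_mono Bochner_Integration.integrable_add)
  also have "\<dots> = (\<integral>\<omega>. exp_drift k \<omega> \<partial>M) + (\<integral>\<omega>. Z \<omega> * r (H k \<omega>) \<partial>M)"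
    using E_int Zr_int by (intro Bochner_Integration.integral_add)
  also have "(\<integral>\<omega>. Z \<omega> * r (H k \<omega>) \<partial>M) \<le> 0"
    using integral_mult_nonpos_of_real_cond_exp[OF F subalgebra_vimage_algebra[OF G_measurable[OF k]]
        Z_F Z H_measurable[OF k] r_measurable r_integrable[OF k]
        cond_exp_indicator_H_past_eq[OF k, folded F_def] cond_exp_r_nonpos[OF k]] .
  finally show ?thesis
    by simp
qed

lemma integral_exp_drift_le_1: "k \<le> n \<Longrightarrow> (\<integral>\<omega>. exp_drift k \<omega> \<partial>M) \<le> 1"
proof (induction k)
  case 0
  then show ?case by (simp add: exp_drift_def prob_space)
next
  case (Suc k)
  then show ?case
    using integral_exp_drift_Suc_le[of k] by simp
qed

end

theorem lemma3:
  fixes M :: "'w measure" and SG :: "'g measure" and SH :: "'h measure"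
    and G :: "nat \<Rightarrow> 'w \<Rightarrow> 'g" and H :: "nat \<Rightarrow> 'w \<Rightarrow> 'h"
    and v :: "'g \<Rightarrow> real" and r :: "'h \<Rightarrow> real" and a :: real and n :: nat and lam :: real
  assumes "prob_space M"
    and "alt_markov_chain M SG SH n G H"
    and "v \<in> borel_measurable SG" and "\<forall>x\<in>space SG. v x \<ge> 0"
    and "r \<in> borel_measurable SH"
    and "a > 0"
    and "\<forall>i<n. \<forall>\<omega>\<in>space M. \<bar>r (H i \<omega>)\<bar> \<le> a * sqrt (v (G i \<omega>))"
    and "\<forall>i<n. integrable M (\<lambda>\<omega>. r (H i \<omega>))"
    and "\<forall>i<n. AE \<omega> in M. real_cond_exp M (vimage_algebra (space M) (G i) SG) (\<lambda>x. r (H i x)) \<omega> \<le> 0"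
    and "lam > 0"
  shows "measure M {\<omega>\<in>space M. (\<Sum>i<n. r (H i \<omega>) - v (G i \<omega>)) \<ge> lam}
           \<le> exp (- (2 / a\<^sup>2) * lam)"
proof -
  interpret markov_drift_chain M SG SH n G H v r a
    using assms by (intro markov_drift_chain.intro markov_drift_chain_axioms.intro) simp_all
  have "{\<omega>\<in>space M. (\<Sum>i<n. r (H i \<omega>) - v (G i \<omega>)) \<ge> lam}
      = {\<omega>\<in>space M. exp_drift n \<omega> \<ge> exp (2 / a\<^sup>2 * lam)}"
    using a_pos by (auto simp: exp_drift_def divide_le_cancel)
  moreover have "measure M {\<omega>\<in>space M. exp_drift n \<omega> \<ge> exp (2 / a\<^sup>2 * lam)}
      \<le> (\<integral>\<omega>. exp_drift n \<omega> \<partial>M) / exp (2 / a\<^sup>2 * lam)"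
    using integrable_exp_drift[of n] exp_drift_pos
    by (intro integral_Markov_inequality_measure) (auto intro!: AE_I2 less_imp_le)
  moreover have "(\<integral>\<omega>. exp_drift n \<omega> \<partial>M) / exp (2 / a\<^sup>2 * lam) \<le> exp (- (2 / a\<^sup>2) * lam)"
    using integral_exp_drift_le_1[of n] by (simp add: exp_minus divide_right_mono field_simps)
  ultimately show ?thesis
    by simp
qed

end
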